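(* For all integers $m\ge 2$ and $n\ge 1$, $p(m,n)<n!/2$.
   Context: For integers $m\ge 2$, $n\ge 1$, a valid $(m,n)$-sequence is a sequence $(a_1,\dots,a_{mn})$ with entries in $\{1,\dots,n\}$ in which each $k\in\{1,\dots,n\}$ occurs exactly $m$ times, and such that any two consecutive occurrences of $k$ are separated by exactly $k$ other terms; equivalently, there is an index $\theta_k$ such that $k$ occurs exactly at the positions $\theta_k,\ \theta_k+(k+1),\ \dots,\theta_k+(m-1)(k+1)$ (all in $\{1,\dots,mn\}$). The reversal of a valid sequence is again valid; $p(m,n)$ denotes the number of valid $(m,n)$-sequences counted up to reversal (i.e. the number of equivalence classes of valid sequences under identifying a sequence with its reversal). *)

theory Defs
  imports Complex_Main
begin

text \<open>Sequences (a_1,...,a_{mn}) are lists; the term a_i is xs ! (i - 1).\<close>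

definition valid_seq :: "nat \<Rightarrow> nat \<Rightarrow> nat list \<Rightarrow> bool" where
  "valid_seq m n xs \<longleftrightarrow>
     length xs = m * n \<and> set xs \<subseteq> {1..n} \<and>
     (\<forall>k\<in>{1..n}. \<exists>\<theta>::nat.
        (\<forall>j<m. \<theta> + j * (k + 1) \<in> {1..m * n}) \<and>
        {i \<in> {1..m * n}. xs ! (i - 1) = k} = {\<theta> + j * (k + 1) | j. j < m})"

definition p_count :: "nat \<Rightarrow> nat \<Rightarrow> nat" where
  "p_count m n = card ((\<lambda>xs. {xs, rev xs}) ` {xs. valid_seq m n xs})"

end

theory Submission
  imports Defs "HOL-Combinatorics.Multiset_Permutations"
begin

(* Write V for the set of valid (m,n)-sequences.  Since p(m,n) counts the
   classes {xs, rev xs}, it suffices to show that (1) V is closed under reversal and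
   contains no palindrome, so that 2 p(m,n) = |V|, and (2) |V| < n!.

   For (2) we map a valid sequence xs to remdups xs, the list of the values 1..n in the
   order of their LAST occurrences; this is a permutation of {1..n}.  Reading xs from the
   right, the entry at position i either is a value that occurs again later (then, as the
   occurrences of each value form an arithmetic progression with fixed difference and
   length, the entry is forced by the suffix) or it is the last occurrence of a value
   (then it is the next entry of remdups xs, read from the right).  Hence remdups is
   injective on V.  It is not surjective: the last occurrence of n is so late that n is
   never the first entry of remdups xs, so the permutation n, n-1, ..., 1 is missed. *)

definition positions :: "'a list \<Rightarrow> 'a \<Rightarrow> nat set" where
  "positions xs a = {i. i < length xs \<and> xs ! i = a}"

definition progression :: "nat \<Rightarrow> nat \<Rightarrow> nat \<Rightarrow> nat set" where
  "progression m d \<theta> = {\<theta> + j * d | j. j < m}"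

lemma progression_iff: "i \<in> progression m d \<theta> \<longleftrightarrow> (\<exists>j<m. i = \<theta> + j * d)"
  unfolding progression_def by blast

lemma progression_bounds:
  assumes "i \<in> progression m d \<theta>"
  shows "\<theta> \<le> i" and "i \<le> \<theta> + (m - 1) * d"
proof -
  obtain j where "j < m" and i: "i = \<theta> + j * d"
    using assms unfolding progression_def by blast
  then have "j * d \<le> (m - 1) * d" by (intro mult_le_mono1) simp
  then show "\<theta> \<le> i" and "i \<le> \<theta> + (m - 1) * d" using i by simp_all
qed

lemma progression_ends:
  assumes "m \<ge> 1"
  shows "\<theta> \<in> progression m d \<theta>" and "\<theta> + (m - 1) * d \<in> progression m d \<theta>"
  unfolding progression_def using assms by (force, force)

lemma progression_start_unique:
  assumes "m \<ge> 1" and "progression m d \<theta> = progression m d \<theta>'"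
  shows "\<theta> = \<theta>'"
proof (rule order_antisym)
  show "\<theta> \<le> \<theta>'" using progression_bounds(1) progression_ends(1)[OF assms(1), of \<theta>'] assms(2) by blast
  show "\<theta>' \<le> \<theta>" using progression_bounds(1) progression_ends(1)[OF assms(1), of \<theta>] assms(2) by blast
qed

lemma Suc_image_progression: "Suc ` progression m d \<theta> = progression m d (Suc \<theta>)"
  unfolding progression_def by (auto simp: image_iff)

lemma reflect_progression:
  assumes "\<theta> + (m - 1) * d \<le> c"
  shows "(\<lambda>i. c - i) ` progression m d \<theta> = progression m d (c - (\<theta> + (m - 1) * d))"
proof -
  have mirror: "c - (\<theta> + j * d) = (c - (\<theta> + (m - 1) * d)) + (m - 1 - j) * d" if "j < m" for j
  proof -
    have "j * d \<le> (m - 1) * d" using that by (intro mult_le_mono1) simp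
    moreover have "(m - 1 - j) * d = (m - 1) * d - j * d" by (simp add: diff_mult_distrib)
    ultimately show ?thesis using assms by linarith
  qed
  show ?thesis
  proof (intro set_eqI iffI)
    fix i assume "i \<in> (\<lambda>i. c - i) ` progression m d \<theta>"
    then obtain j where j: "j < m" "i = c - (\<theta> + j * d)" by (auto simp: progression_iff)
    moreover have "m - 1 - j < m" using j(1) by simp
    ultimately show "i \<in> progression m d (c - (\<theta> + (m - 1) * d))"
      using mirror[OF j(1)] unfolding progression_iff by blast
  next
    fix i assume "i \<in> progression m d (c - (\<theta> + (m - 1) * d))"
    then obtain j where j: "j < m" "i = (c - (\<theta> + (m - 1) * d)) + j * d"
      by (auto simp: progression_iff)
    have "m - 1 - (m - 1 - j) = j" using j(1) by simp
    then have "i = c - (\<theta> + (m - 1 - j) * d)" using mirror[of "m - 1 - j"] j by simp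
    moreover have "\<theta> + (m - 1 - j) * d \<in> progression m d \<theta>"
      unfolding progression_iff using j(1) by (intro exI[of _ "m - 1 - j"]) simp
    ultimately show "i \<in> (\<lambda>i. c - i) ` progression m d \<theta>" by (rule image_eqI)
  qed
qed

lemma positions_rev: "positions (rev xs) a = (\<lambda>i. length xs - 1 - i) ` positions xs a"
proof (intro set_eqI iffI)
  fix i assume "i \<in> positions (rev xs) a"
  then have "i < length xs" "xs ! (length xs - 1 - i) = a"
    unfolding positions_def by (auto simp: rev_nth)
  then show "i \<in> (\<lambda>i. length xs - 1 - i) ` positions xs a"
    unfolding positions_def by (intro image_eqI[of _ _ "length xs - 1 - i"]) auto
qed (auto simp: positions_def rev_nth)

lemma shifted_positions: "{i \<in> {1..length xs}. xs ! (i - 1) = a} = Suc ` positions xs a"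
proof (intro set_eqI iffI)
  fix i assume "i \<in> {i \<in> {1..length xs}. xs ! (i - 1) = a}"
  then show "i \<in> Suc ` positions xs a"
    unfolding positions_def by (intro image_eqI[of _ _ "i - 1"]) auto
qed (auto simp: positions_def)

(* Validity in 0-based form: the positions of each value k in {1..n} form a progression
   of m terms with difference k + 1.  The bound "all terms lie in the list" of the
   original definition is then automatic. *)
lemma valid_seq_iff:
  assumes "m \<ge> 1"
  shows "valid_seq m n xs \<longleftrightarrow> length xs = m * n \<and> set xs \<subseteq> {1..n} \<and>
           (\<forall>k\<in>{1..n}. \<exists>\<theta>. positions xs k = progression m (k + 1) \<theta>)"
proof -
  have shift: "(\<exists>\<theta>. (\<forall>j<m. \<theta> + j * (k + 1) \<in> {1..length xs}) \<and>
           {i \<in> {1..length xs}. xs ! (i - 1) = k} = progression m (k + 1) \<theta>) \<longleftrightarrow>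
        (\<exists>\<theta>. positions xs k = progression m (k + 1) \<theta>)" for k
  proof
    assume "\<exists>\<theta>. (\<forall>j<m. \<theta> + j * (k + 1) \<in> {1..length xs}) \<and>
           {i \<in> {1..length xs}. xs ! (i - 1) = k} = progression m (k + 1) \<theta>"
    then obtain \<theta> where range: "\<forall>j<m. \<theta> + j * (k + 1) \<in> {1..length xs}"
      and eq: "{i \<in> {1..length xs}. xs ! (i - 1) = k} = progression m (k + 1) \<theta>" by blast
    have "\<theta> = Suc (\<theta> - 1)" using range[rule_format, of 0] assms by simp
    then have "Suc ` positions xs k = Suc ` progression m (k + 1) (\<theta> - 1)"
      using eq unfolding shifted_positions Suc_image_progression by simp
    then show "\<exists>\<theta>. positions xs k = progression m (k + 1) \<theta>"
      by (auto simp: inj_image_eq_iff)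
  next
    assume "\<exists>\<theta>. positions xs k = progression m (k + 1) \<theta>"
    then obtain \<theta> where pos: "positions xs k = progression m (k + 1) \<theta>" by blast
    have "\<theta> + j * (k + 1) < length xs" if "j < m" for j
    proof -
      have "\<theta> + j * (k + 1) \<in> positions xs k" unfolding pos progression_iff using that by blast
      then show ?thesis unfolding positions_def by simp
    qed
    moreover have "{i \<in> {1..length xs}. xs ! (i - 1) = k} = progression m (k + 1) (Suc \<theta>)"
      unfolding shifted_positions pos Suc_image_progression ..
    ultimately show "\<exists>\<theta>. (\<forall>j<m. \<theta> + j * (k + 1) \<in> {1..length xs}) \<and>
           {i \<in> {1..length xs}. xs ! (i - 1) = k} = progression m (k + 1) \<theta>"
      by (intro exI[of _ "Suc \<theta>"]) (simp add: Suc_le_eq)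
  qed
  show ?thesis
  proof (cases "length xs = m * n")
    case True
    show ?thesis using shift unfolding valid_seq_def progression_def[symmetric] True by simp
  qed (simp add: valid_seq_def)
qed

lemma valid_seq_positions:
  assumes "m \<ge> 1" and "valid_seq m n xs" and "k \<in> {1..n}"
  shows "\<exists>\<theta>. positions xs k = progression m (k + 1) \<theta>"
  using assms valid_seq_iff by blast

lemma positions_progression_last:
  assumes "m \<ge> 1" and "positions xs k = progression m d \<theta>"
  shows "\<theta> + (m - 1) * d < length xs" and "xs ! (\<theta> + (m - 1) * d) = k"
  using progression_ends(2)[OF assms(1)] assms(2) unfolding positions_def by blast+

lemma valid_seq_set:
  assumes "m \<ge> 1" and "valid_seq m n xs"
  shows "set xs = {1..n}"
proof
  show "set xs \<subseteq> {1..n}" using assms(2) valid_seq_iff[OF assms(1)] by blast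
  show "{1..n} \<subseteq> set xs"
  proof
    fix k assume "k \<in> {1..n}"
    then obtain \<theta> where "positions xs k = progression m (k + 1) \<theta>"
      using valid_seq_positions assms by blast
    then show "k \<in> set xs" using positions_progression_last[OF assms(1)] by (metis nth_mem)
  qed
qed

lemma valid_seq_rev:
  assumes "m \<ge> 1" and "valid_seq m n xs"
  shows "valid_seq m n (rev xs)"
proof -
  have "\<exists>\<theta>. positions (rev xs) k = progression m (k + 1) \<theta>" if k: "k \<in> {1..n}" for k
  proof -
    obtain \<theta> where pos: "positions xs k = progression m (k + 1) \<theta>"
      using valid_seq_positions[OF assms k] by blast
    have "\<theta> + (m - 1) * (k + 1) \<le> length xs - 1"
      using positions_progression_last(1)[OF assms(1) pos] by simp
    then show ?thesis unfolding positions_rev pos by (blast dest: reflect_progression)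
  qed
  then show ?thesis using assms valid_seq_iff by simp
qed

lemma palindrome_centre:
  assumes "m \<ge> 1" and "positions xs k = progression m d \<theta>" and "rev xs = xs"
  shows "2 * \<theta> + (m - 1) * d + 1 = length xs"
proof -
  have last: "\<theta> + (m - 1) * d < length xs" using positions_progression_last(1)[OF assms(1,2)] .
  have "progression m d \<theta> = positions (rev xs) k" using assms(2,3) by simp
  also have "\<dots> = progression m d (length xs - 1 - (\<theta> + (m - 1) * d))"
    unfolding positions_rev assms(2) using last by (intro reflect_progression) simp
  finally have "\<theta> = length xs - 1 - (\<theta> + (m - 1) * d)"
    using progression_start_unique[OF assms(1)] by blast
  then show ?thesis using last by linarith
qed

(* No valid sequence with n >= 2 is a palindrome: the symmetric progressions of the
   values 1 (difference 2) and 2 (difference 3) would share a position. *)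
lemma valid_seq_not_palindrome:
  assumes "m \<ge> 1" and "n \<ge> 2" and "valid_seq m n xs"
  shows "rev xs \<noteq> xs"
proof
  assume pal: "rev xs = xs"
  obtain \<theta>\<^sub>1 where pos1: "positions xs 1 = progression m 2 \<theta>\<^sub>1"
    using valid_seq_positions[OF assms(1,3), of 1] assms(2) by (auto simp: numeral_2_eq_2)
  obtain \<theta>\<^sub>2 where pos2: "positions xs 2 = progression m 3 \<theta>\<^sub>2"
    using valid_seq_positions[OF assms(1,3), of 2] assms(2) by (auto simp: numeral_3_eq_3)
  have c1: "2 * \<theta>\<^sub>1 + (m - 1) * 2 + 1 = length xs" using palindrome_centre[OF assms(1) pos1 pal] .
  have c2: "2 * \<theta>\<^sub>2 + (m - 1) * 3 + 1 = length xs" using palindrome_centre[OF assms(1) pos2 pal] .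
  define h where "h = \<theta>\<^sub>1 - \<theta>\<^sub>2"
  have h: "m - 1 = 2 * h" "\<theta>\<^sub>1 = \<theta>\<^sub>2 + h" using c1 c2 unfolding h_def by linarith+
  then have "h < m" using assms(1) by linarith
  then have "\<theta>\<^sub>1 + h * 2 \<in> positions xs 1" and "\<theta>\<^sub>2 + h * 3 \<in> positions xs 2"
    unfolding pos1 pos2 progression_iff by blast+
  moreover have "\<theta>\<^sub>1 + h * 2 = \<theta>\<^sub>2 + h * 3" using h by simp
  ultimately show False unfolding positions_def by simp
qed

(* remdups keeps last occurrences, so it splits along an append as follows. *)
lemma remdups_append_filter:
  "remdups (xs @ ys) = remdups (filter (\<lambda>x. x \<notin> set ys) xs) @ remdups ys"
  by (induction xs) auto

lemma remdups_at_last_occurrence: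
  assumes "i < length xs" and "xs ! i \<notin> set (drop (Suc i) xs)"
  obtains us where "remdups xs = us @ xs ! i # remdups (drop (Suc i) xs)"
proof -
  have "xs = take i xs @ [xs ! i] @ drop (Suc i) xs"
    using assms(1) by (simp add: id_take_nth_drop)
  then have "remdups xs = remdups (filter (\<lambda>x. x \<notin> set ([xs ! i] @ drop (Suc i) xs)) (take i xs))
      @ remdups ([xs ! i] @ drop (Suc i) xs)"
    by (metis remdups_append_filter)
  then show ?thesis using assms(2) that by simp
qed

lemma positions_beyond:
  assumes "drop (Suc i) xs = drop (Suc i) ys" and "i < q"
  shows "q \<in> positions xs a \<longleftrightarrow> q \<in> positions ys a"
proof -
  have "q \<in> positions zs a \<longleftrightarrow> q - Suc i \<in> positions (drop (Suc i) zs) a" for zs :: "'a list"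
    using assms(2) by (auto simp: positions_def)
  then show ?thesis using assms(1) by metis
qed

lemma in_set_drop_positions: "a \<in> set (drop (Suc i) xs) \<longleftrightarrow> (\<exists>p. i < p \<and> p \<in> positions xs a)"
proof
  assume "a \<in> set (drop (Suc i) xs)"
  then obtain q where "q < length (drop (Suc i) xs)" "drop (Suc i) xs ! q = a"
    by (auto simp: in_set_conv_nth)
  then show "\<exists>p. i < p \<and> p \<in> positions xs a"
    by (intro exI[of _ "Suc i + q"]) (simp add: positions_def)
next
  assume "\<exists>p. i < p \<and> p \<in> positions xs a"
  then obtain p where "i < p" "p < length xs" "xs ! p = a" by (auto simp: positions_def)
  then have "p - Suc i < length (drop (Suc i) xs)" and "drop (Suc i) xs ! (p - Suc i) = a"
    by simp_all
  then show "a \<in> set (drop (Suc i) xs)" by (metis nth_mem)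
qed

(* If a occurs beyond i in xs, and xs, ys agree beyond i, then the last occurrence of a
   in xs is also an occurrence in ys, hence not after the last occurrence in ys. *)
lemma last_occurrence_mono:
  assumes "m \<ge> 1"
    and "positions xs a = progression m d \<theta>" and "positions ys a = progression m d \<theta>'"
    and "drop (Suc i) xs = drop (Suc i) ys" and "a \<in> set (drop (Suc i) xs)"
  shows "\<theta> + (m - 1) * d \<le> \<theta>' + (m - 1) * d"
proof -
  obtain p where "i < p" and "p \<in> progression m d \<theta>"
    using assms(2,5) in_set_drop_positions by metis
  then have "i < \<theta> + (m - 1) * d" using progression_bounds(2) by (blast intro: less_le_trans)
  moreover have "\<theta> + (m - 1) * d \<in> positions xs a"
    unfolding assms(2) using progression_ends(2)[OF assms(1)] .
  ultimately have "\<theta> + (m - 1) * d \<in> progression m d \<theta>'"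
    using positions_beyond[OF assms(4)] assms(3) by blast
  then show ?thesis by (rule progression_bounds(2))
qed

(* Key step of injectivity: an entry whose value occurs again later is determined by the
   suffix, because the suffix fixes the last occurrence and hence the whole progression. *)
lemma valid_seq_repeated_entry:
  assumes "m \<ge> 1" and xs: "valid_seq m n xs" and ys: "valid_seq m n ys"
    and suffix: "drop (Suc i) xs = drop (Suc i) ys"
    and i: "i < length xs" and repeated: "xs ! i \<in> set (drop (Suc i) xs)"
  shows "ys ! i = xs ! i"
proof -
  define a where "a = xs ! i"
  have "a \<in> {1..n}" using valid_seq_set[OF assms(1) xs] i unfolding a_def by auto
  then obtain \<theta> \<theta>' where pos: "positions xs a = progression m (a + 1) \<theta>"
    and pos': "positions ys a = progression m (a + 1) \<theta>'"
    using valid_seq_positions assms(1) xs ys by metis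
  have "\<theta> + (m - 1) * (a + 1) \<le> \<theta>' + (m - 1) * (a + 1)"
    using last_occurrence_mono[OF assms(1) pos pos' suffix] repeated unfolding a_def by blast
  moreover have "\<theta>' + (m - 1) * (a + 1) \<le> \<theta> + (m - 1) * (a + 1)"
    using last_occurrence_mono[OF assms(1) pos' pos suffix[symmetric]] repeated suffix
    unfolding a_def by simp
  ultimately have "positions xs a = positions ys a" using pos pos' by simp
  moreover have "i \<in> positions xs a" using i unfolding a_def positions_def by simp
  ultimately show ?thesis unfolding a_def positions_def by simp
qed

(* A valid sequence is determined by the order of the last occurrences of its values;
   proved by reconstructing it from the right. *)
lemma valid_seq_remdups_inj:
  assumes "m \<ge> 1" and xs: "valid_seq m n xs" and ys: "valid_seq m n ys"
    and eq: "remdups xs = remdups ys"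
  shows "xs = ys"
proof -
  have len: "length ys = length xs" using xs ys valid_seq_iff[OF assms(1)] by simp
  have "drop i xs = drop i ys" if "i \<le> length xs" for i
    using that
  proof (induction rule: inc_induct)
    case base
    then show ?case using len by simp
  next
    case (step i)
    have "xs ! i = ys ! i"
    proof (cases "xs ! i \<in> set (drop (Suc i) xs) \<or> ys ! i \<in> set (drop (Suc i) ys)")
      case True
      then show ?thesis
        using valid_seq_repeated_entry[OF assms(1) xs ys step.IH step.hyps(2)]
          valid_seq_repeated_entry[OF assms(1) ys xs step.IH[symmetric]] step.hyps(2) len
        by auto
    next
      case False
      then obtain us vs where "remdups xs = us @ xs ! i # remdups (drop (Suc i) xs)"
        and "remdups ys = vs @ ys ! i # remdups (drop (Suc i) ys)"
        using remdups_at_last_occurrence step.hyps(2) len by (metis)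
      then show ?thesis using eq step.IH by simp
    qed
    then show ?case using step.hyps(2) step.IH len by (metis Cons_nth_drop_Suc)
  qed
  from this[of 0] show ?thesis by simp
qed

(* The value n is never the first entry of remdups xs: its last occurrence is followed
   by at most n - m < n - 1 positions, too few for the other n - 1 values. *)
lemma remdups_hd_valid_seq:
  assumes "m \<ge> 2" and "n \<ge> 1" and xs: "valid_seq m n xs"
  shows "hd (remdups xs) \<noteq> n"
proof -
  have m: "m \<ge> 1" using assms(1) by simp
  obtain \<theta> where pos: "positions xs n = progression m (n + 1) \<theta>"
    using valid_seq_positions[OF m xs] assms(2) by auto
  define \<mu> where "\<mu> = \<theta> + (m - 1) * (n + 1)"
  have \<mu>: "\<mu> < length xs" "xs ! \<mu> = n"
    using positions_progression_last[OF m pos] unfolding \<mu>_def by simp_all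
  have "n \<notin> set (drop (Suc \<mu>) xs)"
    using progression_bounds(2) unfolding in_set_drop_positions pos \<mu>_def by (meson leD)
  then obtain us where split: "remdups xs = us @ n # remdups (drop (Suc \<mu>) xs)"
    using remdups_at_last_occurrence \<mu> by metis
  have "length (remdups xs) = n" using valid_seq_set[OF m xs] by (simp add: length_remdups_card_conv)
  then have "length us + 1 + length (remdups (drop (Suc \<mu>) xs)) = n" using split by simp
  moreover have "length (remdups (drop (Suc \<mu>) xs)) \<le> length xs - Suc \<mu>"
    using length_remdups_leq by (metis length_drop)
  moreover have "length xs - Suc \<mu> + m \<le> n"
  proof -
    have "length xs = m * n" using xs valid_seq_iff[OF m] by blast
    moreover have "(m - 1) * (n + 1) + n + 1 = m * n + m"
      using m by (cases m) (simp_all add: algebra_simps)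
    ultimately show ?thesis using \<mu>(1) unfolding \<mu>_def by linarith
  qed
  ultimately have "0 < length us" using assms(1) by linarith
  then have "us \<noteq> []" by simp
  moreover have "n \<notin> set us" using split distinct_remdups[of xs] by simp
  ultimately show ?thesis using split by (cases us) auto
qed

lemma finite_valid_seqs: "finite {xs. valid_seq m n xs}"
proof (rule finite_subset)
  show "{xs. valid_seq m n xs} \<subseteq> {xs. set xs \<subseteq> {1..n} \<and> length xs = m * n}"
    unfolding valid_seq_def by blast
qed (simp add: finite_lists_length_eq)

(* There are fewer than n! valid sequences: remdups injects them into the permutations of
   {1..n} other than n, n-1, ..., 1. *)
lemma card_valid_seqs_lt_fact:
  assumes "m \<ge> 2" and "n \<ge> 1"
  shows "card {xs. valid_seq m n xs} < fact n"
proof -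
  define V where "V = {xs. valid_seq m n xs}"
  define P where "P = permutations_of_set {1..n}"
  define \<sigma> where "\<sigma> = rev [1..<Suc n]"
  have m: "m \<ge> 1" using assms(1) by simp
  have \<sigma>: "\<sigma> \<in> P" unfolding P_def \<sigma>_def by (rule permutations_of_setI) auto
  have "hd \<sigma> = n" unfolding \<sigma>_def using assms(2) by simp
  then have image: "remdups ` V \<subseteq> P - {\<sigma>}"
    unfolding V_def P_def using valid_seq_set[OF m] remdups_hd_valid_seq[OF assms] by auto
  have "inj_on remdups V" unfolding V_def using valid_seq_remdups_inj[OF m] by (intro inj_onI) blast
  then have "card V = card (remdups ` V)" by (simp add: card_image)
  also have "\<dots> \<le> card (P - {\<sigma>})" using image unfolding P_def by (intro card_mono) auto
  also have "\<dots> < card P" using \<sigma> unfolding P_def by (intro card_Diff1_less) auto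
  also have "\<dots> = fact n" unfolding P_def by simp
  finally show ?thesis unfolding V_def .
qed

lemma card_reversal_classes:
  assumes "finite V" and "\<And>xs. xs \<in> V \<Longrightarrow> rev xs \<in> V" and "\<And>xs. xs \<in> V \<Longrightarrow> rev xs \<noteq> xs"
  shows "2 * card ((\<lambda>xs. {xs, rev xs}) ` V) = card V"
proof -
  have "\<Union>((\<lambda>xs. {xs, rev xs}) ` V) = V" using assms(2) by auto
  moreover have "2 * card ((\<lambda>xs. {xs, rev xs}) ` V) = card (\<Union>((\<lambda>xs. {xs, rev xs}) ` V))"
    using assms by (intro card_partition) (auto simp: card_2_iff)
  ultimately show ?thesis by simp
qed

theorem proposition3:
  fixes m n :: nat
  assumes "m \<ge> 2" and "n \<ge> 1"
  shows "real (p_count m n) < real (fact n) / 2"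
proof -
  define V where "V = {xs. valid_seq m n xs}"
  have fewer: "card V < fact n" unfolding V_def using card_valid_seqs_lt_fact[OF assms] .
  (* For n = 1 the palindrome argument does not apply, but then V is empty since |V| < 1!. *)
  have "2 * p_count m n = card V"
  proof (cases "n = 1")
    case True
    then have "V = {}" using fewer finite_valid_seqs unfolding V_def by simp
    then show ?thesis unfolding p_count_def V_def[symmetric] by simp
  next
    case False
    then have "n \<ge> 2" using assms(2) by simp
    moreover have "m \<ge> 1" using assms(1) by simp
    ultimately show ?thesis unfolding p_count_def V_def
      using valid_seq_rev valid_seq_not_palindrome
      by (intro card_reversal_classes finite_valid_seqs) auto
  qed
  with fewer have "real (2 * p_count m n) < real (fact n)" by (simp only: of_nat_less_iff)
  then show ?thesis by simp
qed

end
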